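(* Let $G'$ be a connected graph, let $w$ be a vertex of $G'$, let $k\ge 2$, and let $G$ be obtained from $G'$ by adding $k$ new vertices $1,\dots,k$, each adjacent only to $w$. Let $\Delta$ be the distance squared matrix of $G$, let $\Delta_k$ be the distance squared matrix of the graph $G\setminus\{1,\dots,k-1\}$ (that is, $G'$ with the single pendant vertex $k$ attached at $w$), and let $\mathbf e_k$ be the standard basis vector corresponding to vertex $k$ in the index set of $\Delta_k$. Then \[ i_-(\Delta)=k-1+i_-\!\left(\Delta_k+\left(4-\tfrac{4}{k}\right)\mathbf e_k\mathbf e_k^T\right). \]
   Context: For a connected graph $G$ with vertices $1,\dots,n$, the distance squared matrix $\Delta$ is the $n\times n$ matrix with $(i,j)$ entry $d_{ij}^2$, where $d_{ij}$ is the graph distance between $i$ and $j$. For a real symmetric matrix $M$, $i_-(M)$ denotes the number of negative eigenvalues of $M$ counted with multiplicity. *)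

theory Defs
  imports "Jordan_Normal_Form.Char_Poly"
begin

definition simple_graph :: "nat \<Rightarrow> (nat \<Rightarrow> nat \<Rightarrow> bool) \<Rightarrow> bool" where
  "simple_graph N Adj \<longleftrightarrow>
     (\<forall>u v. Adj u v \<longrightarrow> u < N \<and> v < N \<and> u \<noteq> v \<and> Adj v u)"

definition is_walk :: "nat \<Rightarrow> (nat \<Rightarrow> nat \<Rightarrow> bool) \<Rightarrow> nat list \<Rightarrow> bool" where
  "is_walk N Adj xs \<longleftrightarrow> xs \<noteq> [] \<and> set xs \<subseteq> {..<N} \<and>
     (\<forall>i. Suc i < length xs \<longrightarrow> Adj (xs ! i) (xs ! Suc i))"

definition connected_graph :: "nat \<Rightarrow> (nat \<Rightarrow> nat \<Rightarrow> bool) \<Rightarrow> bool" where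
  "connected_graph N Adj \<longleftrightarrow> 0 < N \<and>
     (\<forall>u<N. \<forall>v<N. \<exists>xs. is_walk N Adj xs \<and> hd xs = u \<and> last xs = v)"

definition gdist :: "nat \<Rightarrow> (nat \<Rightarrow> nat \<Rightarrow> bool) \<Rightarrow> nat \<Rightarrow> nat \<Rightarrow> nat" where
  "gdist N Adj u v = (LEAST l. \<exists>xs. is_walk N Adj xs \<and> hd xs = u \<and> last xs = v \<and> length xs = Suc l)"

definition dist_sq_mat :: "nat \<Rightarrow> (nat \<Rightarrow> nat \<Rightarrow> bool) \<Rightarrow> real mat" where
  "dist_sq_mat N Adj = mat N N (\<lambda>(i, j). (real (gdist N Adj i j))^2)"

text \<open>Number of negative eigenvalues, counted with multiplicity (as roots of the
  characteristic polynomial); for real symmetric matrices all eigenvalues are real.\<close>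
definition neg_inertia :: "real mat \<Rightarrow> nat" where
  "neg_inertia A = (\<Sum>a \<in> {a. a < 0 \<and> poly (char_poly A) a = 0}. order a (char_poly A))"

definition add_pendants :: "nat \<Rightarrow> (nat \<Rightarrow> nat \<Rightarrow> bool) \<Rightarrow> nat \<Rightarrow> nat \<Rightarrow> nat \<Rightarrow> nat \<Rightarrow> bool" where
  "add_pendants n Adj' w k u v \<longleftrightarrow>
     (u < n \<and> v < n \<and> Adj' u v) \<or>
     (u = w \<and> n \<le> v \<and> v < n + k) \<or>
     (v = w \<and> n \<le> u \<and> u < n + k)"

end

theory Submission
  imports Defs
begin

text \<open>Order the vertices of \<open>G\<close> as those of \<open>G'\<close> followed by the pendants \<open>n, ..., n + k - 1\<close>.
  A pendant sees \<open>G'\<close> exactly as the pendant \<open>n\<close> of \<open>G\<^sub>k\<close> does, and distinct pendants are at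
  distance 2. Hence \<open>\<Delta>\<close> arises from \<open>T = \<Delta>\<^sub>k + (4 - 4/k) e\<^sub>n e\<^sub>n\<^sup>T\<close> by repeating its last
  row and column \<open>k\<close> times and putting \<open>4 (J - I)\<close> on the pendant block. Pass to the basis
  consisting of the unit vectors of \<open>G'\<close>, the average \<open>a\<close> of the pendant unit vectors, and the
  differences \<open>e\<^sub>p - e\<^sub>n\<close> for the other pendants \<open>p\<close>. The differences are orthogonal for the
  form of \<open>\<Delta>\<close> to everything else, and \<open>a\<^sup>T \<Delta> a = 4 - 4/k\<close> accounts for the correction term.
  So \<open>\<Delta>\<close> is congruent to \<open>T \<oplus> -4 (I + J)\<close>, whose second summand is negative definite of
  order \<open>k - 1\<close>. Sylvester's law of inertia, derived from the spectral theorem for real symmetric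
  matrices, gives the claim.\<close>

section \<open>Negative inertia of diagonal matrices\<close>

definition neg_root_count :: "real poly \<Rightarrow> nat" where
  "neg_root_count p = (\<Sum>a \<in> {a. a < 0 \<and> poly p a = 0}. order a p)"

lemma neg_root_count_mult:
  assumes p: "p \<noteq> 0" and q: "q \<noteq> 0"
  shows "neg_root_count (p * q) = neg_root_count p + neg_root_count q"
proof -
  let ?R = "\<lambda>p. {a::real. a < 0 \<and> poly p a = 0}"
  have fin: "finite (?R p)" "finite (?R q)"
    using poly_roots_finite[OF p] poly_roots_finite[OF q] by (auto intro: finite_subset)
  have "neg_root_count (p * q) = (\<Sum>a \<in> ?R p \<union> ?R q. order a p + order a q)"
    unfolding neg_root_count_def using p q by (intro sum.cong) (auto simp: order_mult)
  also have "\<dots> = (\<Sum>a \<in> ?R p \<union> ?R q. order a p) + (\<Sum>a \<in> ?R p \<union> ?R q. order a q)"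
    by (rule sum.distrib)
  also have "(\<Sum>a \<in> ?R p \<union> ?R q. order a p) = neg_root_count p"
    unfolding neg_root_count_def using fin by (intro sum.mono_neutral_right) (auto simp: order_root)
  also have "(\<Sum>a \<in> ?R p \<union> ?R q. order a q) = neg_root_count q"
    unfolding neg_root_count_def using fin by (intro sum.mono_neutral_right) (auto simp: order_root)
  finally show ?thesis .
qed

lemma neg_root_count_prod_linear:
  "neg_root_count (\<Prod>a \<leftarrow> xs. [:-a, 1:]) = length (filter (\<lambda>a. a < 0) xs)"
proof (induction xs)
  case Nil
  then show ?case by (simp add: neg_root_count_def)
next
  case (Cons x xs)
  have "{a. a < 0 \<and> poly [:-x, 1:] a = 0} = (if x < 0 then {x} else {})" by auto
  then have linear: "neg_root_count [:-x, 1:] = (if x < 0 then 1 else 0)"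
    by (simp add: neg_root_count_def order_linear)
  have "neg_root_count (\<Prod>a \<leftarrow> x # xs. [:-a, 1:]) = neg_root_count ([:-x, 1:] * (\<Prod>a \<leftarrow> xs. [:-a, 1:]))"
    by simp
  also have "\<dots> = neg_root_count [:-x, 1:] + neg_root_count (\<Prod>a \<leftarrow> xs. [:-a, 1:])"
    by (rule neg_root_count_mult) (auto simp: prod_list_zero_iff)
  finally show ?case using Cons linear by simp
qed

lemma neg_inertia_mat_diag: "neg_inertia (mat_diag n d) = card {i. i < n \<and> d i < 0}"
proof -
  have "upper_triangular (mat_diag n d)" by (auto simp: upper_triangular_def mat_diag_def)
  moreover have "diag_mat (mat_diag n d) = map d [0..<n]"
    by (auto simp: diag_mat_def mat_diag_def intro: nth_equalityI)
  ultimately have "char_poly (mat_diag n d) = (\<Prod>a \<leftarrow> map d [0..<n]. [:-a, 1:])"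
    by (simp add: char_poly_upper_triangular[OF mat_diag_dim])
  then have "neg_inertia (mat_diag n d) = neg_root_count (\<Prod>a \<leftarrow> map d [0..<n]. [:-a, 1:])"
    unfolding neg_inertia_def neg_root_count_def by simp
  also have "\<dots> = card {i. i < n \<and> d i < 0}"
    unfolding neg_root_count_prod_linear length_filter_conv_card by (intro arg_cong[where f = card]) auto
  finally show ?thesis .
qed

text \<open>Unlike \<open>mult_carrier_mat\<close> this rule does not mention the inner dimension of the product,
  so the simplifier can apply it.\<close>

lemma mult_carrier_mat_dims [simp]:
  "dim_row A = nr \<Longrightarrow> dim_col B = nc \<Longrightarrow> A * B \<in> carrier_mat nr nc"
  unfolding carrier_mat_def by simp

lemma mat_diag_dims [simp]: "dim_row (mat_diag n d) = n" "dim_col (mat_diag n d) = n"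
  unfolding mat_diag_def by simp_all

section \<open>The spectral theorem for real symmetric matrices\<close>

definition spectral_decomp :: "nat \<Rightarrow> real mat \<Rightarrow> real mat \<Rightarrow> (nat \<Rightarrow> real) \<Rightarrow> bool" where
  "spectral_decomp n A Q d \<longleftrightarrow> Q \<in> carrier_mat n n \<and> transpose_mat Q * Q = 1\<^sub>m n \<and>
     A = Q * mat_diag n d * transpose_mat Q"

lemma neg_inertia_spectral_decomp:
  assumes "spectral_decomp n A Q d"
  shows "neg_inertia A = card {i. i < n \<and> d i < 0}"
proof -
  from assms have Q: "Q \<in> carrier_mat n n" and QQ: "transpose_mat Q * Q = 1\<^sub>m n"
    and A: "A = Q * mat_diag n d * transpose_mat Q" unfolding spectral_decomp_def by auto
  have Qt: "transpose_mat Q \<in> carrier_mat n n" using Q by simp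
  have "Q * transpose_mat Q = 1\<^sub>m n" by (rule mat_mult_left_right_inverse[OF Qt Q QQ])
  then have "similar_mat A (mat_diag n d)"
    using Q QQ A by (intro similar_matI[of _ _ Q "transpose_mat Q" n]) auto
  then have "char_poly A = char_poly (mat_diag n d)" by (rule char_poly_similar)
  then show ?thesis using neg_inertia_mat_diag unfolding neg_inertia_def by metis
qed

lemma mult_block_diag_mat:
  assumes "A1 \<in> carrier_mat m m" "A2 \<in> carrier_mat p p" "B1 \<in> carrier_mat m m" "B2 \<in> carrier_mat p p"
  shows "four_block_mat A1 (0\<^sub>m m p) (0\<^sub>m p m) A2 * four_block_mat B1 (0\<^sub>m m p) (0\<^sub>m p m) B2 =
    four_block_mat (A1 * B1) (0\<^sub>m m p) (0\<^sub>m p m) (A2 * B2)"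
  using assms by (simp add: mult_four_block_mat[of _ m m _ p _ p _ _ m _ p])

lemma transpose_block_diag_mat:
  assumes "A1 \<in> carrier_mat m m" "A2 \<in> carrier_mat p p"
  shows "transpose_mat (four_block_mat A1 (0\<^sub>m m p) (0\<^sub>m p m) A2) =
    four_block_mat (transpose_mat A1) (0\<^sub>m m p) (0\<^sub>m p m) (transpose_mat A2)"
  using assms by (subst transpose_four_block_mat[of _ m m _ p _ p]) auto

lemma mat_diag_block:
  "mat_diag (m + p) d = four_block_mat (mat_diag m d) (0\<^sub>m m p) (0\<^sub>m p m) (mat_diag p (\<lambda>i. d (m + i)))"
  by (rule eq_matI) (auto simp: mat_diag_def)

lemma spectral_decomp_block_diag:
  assumes "spectral_decomp m A1 Q1 d1" and "spectral_decomp p A2 Q2 d2"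
  shows "spectral_decomp (m + p) (four_block_mat A1 (0\<^sub>m m p) (0\<^sub>m p m) A2)
           (four_block_mat Q1 (0\<^sub>m m p) (0\<^sub>m p m) Q2) (\<lambda>i. if i < m then d1 i else d2 (i - m))"
proof -
  from assms have Q1: "Q1 \<in> carrier_mat m m" and Q2: "Q2 \<in> carrier_mat p p"
    and QQ: "transpose_mat Q1 * Q1 = 1\<^sub>m m" "transpose_mat Q2 * Q2 = 1\<^sub>m p"
    and A: "A1 = Q1 * mat_diag m d1 * transpose_mat Q1" "A2 = Q2 * mat_diag p d2 * transpose_mat Q2"
    unfolding spectral_decomp_def by auto
  let ?d = "\<lambda>i. if i < m then d1 i else d2 (i - m)"
  let ?Q = "four_block_mat Q1 (0\<^sub>m m p) (0\<^sub>m p m) Q2"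
  have D: "mat_diag (m + p) ?d = four_block_mat (mat_diag m d1) (0\<^sub>m m p) (0\<^sub>m p m) (mat_diag p d2)"
    unfolding mat_diag_block by (auto simp: mat_diag_def)
  have "transpose_mat ?Q * ?Q = four_block_mat (1\<^sub>m m) (0\<^sub>m m p) (0\<^sub>m p m) (1\<^sub>m p)"
    using Q1 Q2 by (simp add: transpose_block_diag_mat mult_block_diag_mat QQ)
  also have "\<dots> = 1\<^sub>m (m + p)" by (rule eq_matI) auto
  finally have "transpose_mat ?Q * ?Q = 1\<^sub>m (m + p)" .
  moreover have "four_block_mat A1 (0\<^sub>m m p) (0\<^sub>m p m) A2 = ?Q * mat_diag (m + p) ?d * transpose_mat ?Q"
    using Q1 Q2 by (simp add: D A transpose_block_diag_mat mult_block_diag_mat)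
  ultimately show ?thesis using Q1 Q2 unfolding spectral_decomp_def by simp
qed

lemma spectral_decomp_orthogonal_conj:
  assumes "spectral_decomp n B Q d"
    and W: "W \<in> carrier_mat n n" and WW: "transpose_mat W * W = 1\<^sub>m n"
  shows "spectral_decomp n (W * B * transpose_mat W) (W * Q) d"
proof -
  from assms have Q: "Q \<in> carrier_mat n n" and QQ: "transpose_mat Q * Q = 1\<^sub>m n"
    and B: "B = Q * mat_diag n d * transpose_mat Q" unfolding spectral_decomp_def by auto
  have tWQ: "transpose_mat (W * Q) = transpose_mat Q * transpose_mat W"
    using W Q by (simp add: transpose_mult)
  have "transpose_mat (W * Q) * (W * Q) = transpose_mat Q * (transpose_mat W * W) * Q"
    unfolding tWQ using W Q by (simp add: assoc_mult_mat[of _ n n _ n _ n])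
  also have "\<dots> = 1\<^sub>m n" using Q by (simp add: WW QQ)
  finally have "transpose_mat (W * Q) * (W * Q) = 1\<^sub>m n" .
  moreover have "W * B * transpose_mat W = (W * Q) * mat_diag n d * transpose_mat (W * Q)"
    unfolding tWQ B using W Q by (simp add: assoc_mult_mat[of _ n n _ n _ n] carrier_matD)
  ultimately show ?thesis using W Q unfolding spectral_decomp_def by simp
qed

lemma transpose_congruence:
  fixes S A :: "'a :: comm_semiring_0 mat"
  assumes S: "S \<in> carrier_mat n m" and A: "A \<in> carrier_mat n n"
  shows "transpose_mat (transpose_mat S * A * S) = transpose_mat S * transpose_mat A * S"
proof -
  have "transpose_mat (transpose_mat S * A * S) = transpose_mat S * transpose_mat (transpose_mat S * A)"
    by (rule transpose_mult) (use S A in auto)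
  also have "transpose_mat (transpose_mat S * A) = transpose_mat A * S"
    using transpose_mult[of "transpose_mat S" m n A n] S A by simp
  finally show ?thesis using S A by (simp add: assoc_mult_mat[of _ m n _ n _ m])
qed

lemma spectral_decomp_diag:
  assumes "spectral_decomp n A Q d"
  shows "transpose_mat Q * A * Q = mat_diag n d"
proof -
  from assms have Q: "Q \<in> carrier_mat n n" and QQ: "transpose_mat Q * Q = 1\<^sub>m n"
    and A: "A = Q * mat_diag n d * transpose_mat Q" unfolding spectral_decomp_def by auto
  have "transpose_mat Q * A * Q = (transpose_mat Q * Q) * mat_diag n d * (transpose_mat Q * Q)"
    unfolding A using Q by (simp add: assoc_mult_mat[of _ n n _ n _ n] carrier_matD)
  then show ?thesis by (simp add: QQ)
qed

lemma quadratic_form_congruence: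
  fixes S A :: "'a :: comm_semiring_0 mat"
  assumes S: "S \<in> carrier_mat n n" and A: "A \<in> carrier_mat n n" and x: "x \<in> carrier_vec n"
  shows "x \<bullet> ((transpose_mat S * A * S) *\<^sub>v x) = (S *\<^sub>v x) \<bullet> (A *\<^sub>v (S *\<^sub>v x))"
proof -
  have "x \<bullet> ((transpose_mat S * A * S) *\<^sub>v x) = (transpose_mat S *\<^sub>v (A *\<^sub>v (S *\<^sub>v x))) \<bullet> x"
    using S A x by (simp add: assoc_mult_mat_vec[of _ n n _ n] comm_scalar_prod[of _ n])
  also have "\<dots> = (A *\<^sub>v (S *\<^sub>v x)) \<bullet> (S *\<^sub>v x)"
    by (rule transpose_vec_mult_scalar[OF S x]) (use S A x in simp)
  also have "\<dots> = (S *\<^sub>v x) \<bullet> (A *\<^sub>v (S *\<^sub>v x))"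
    using S A x by (simp add: comm_scalar_prod[of _ n])
  finally show ?thesis .
qed

lemma quadratic_form_mat_diag:
  fixes x :: "'a :: comm_semiring_1 vec"
  assumes x: "x \<in> carrier_vec n"
  shows "x \<bullet> (mat_diag n d *\<^sub>v x) = (\<Sum>i = 0..<n. d i * (x $ i)\<^sup>2)"
proof -
  have "(mat_diag n d *\<^sub>v x) $ i = d i * x $ i" if "i < n" for i
    using x that unfolding mat_diag_def
    by (simp add: scalar_prod_def if_distrib[of "\<lambda>a. a * _"] cong: if_cong)
  then show ?thesis unfolding scalar_prod_def using x
    by (intro sum.cong) (auto simp: power2_eq_square ac_simps)
qed

lemma real_symmetric_eigenvalue_real:
  fixes A :: "real mat"
  assumes A: "A \<in> carrier_mat n n" and sym: "transpose_mat A = A"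
    and ev: "eigenvector (map_mat complex_of_real A) v z"
  shows "z \<in> \<real>"
proof -
  let ?Ac = "map_mat complex_of_real A"
  from ev have v: "v \<in> carrier_vec n" and v0: "v \<noteq> 0\<^sub>v n" and Av: "?Ac *\<^sub>v v = z \<cdot>\<^sub>v v"
    unfolding eigenvector_def using A by auto
  define s where "s = (\<Sum>i = 0..<n. \<Sum>j = 0..<n. cnj (v $ i) * of_real (A $$ (i, j)) * v $ j)"
  have "s = (\<Sum>i = 0..<n. cnj (v $ i) * (?Ac *\<^sub>v v) $ i)"
    unfolding s_def using A v by (simp add: scalar_prod_def sum_distrib_left mult.assoc)
  also have "\<dots> = z * (v \<bullet>c v)"
    unfolding Av using v by (simp add: scalar_prod_def sum_distrib_left algebra_simps)
  finally have s: "s = z * (v \<bullet>c v)" .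
  have "cnj s = (\<Sum>i = 0..<n. \<Sum>j = 0..<n. v $ i * of_real (A $$ (i, j)) * cnj (v $ j))"
    unfolding s_def by simp
  also have "\<dots> = (\<Sum>j = 0..<n. \<Sum>i = 0..<n. v $ i * of_real (A $$ (i, j)) * cnj (v $ j))"
    by (rule sum.swap)
  also have "\<dots> = s"
    unfolding s_def
  proof (intro sum.cong refl)
    fix i j assume "j \<in> {0..<n}" "i \<in> {0..<n}"
    then have "A $$ (i, j) = A $$ (j, i)"
      using A sym by (metis atLeastLessThan_iff carrier_matD index_transpose_mat(1))
    then show "v $ i * of_real (A $$ (i, j)) * cnj (v $ j) = cnj (v $ j) * of_real (A $$ (j, i)) * v $ i"
      by simp
  qed
  finally have "cnj s = s" .
  moreover have "cnj (v \<bullet>c v) = v \<bullet>c v"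
    using v by (simp add: scalar_prod_def mult.commute)
  moreover have "v \<bullet>c v \<noteq> 0"
    using v v0 by simp
  ultimately have "cnj z = z"
    unfolding s by (metis complex_cnj_mult mult_cancel_right)
  then show ?thesis by (simp add: Reals_cnj_iff)
qed

lemma real_symmetric_unit_eigenvector:
  fixes A :: "real mat"
  assumes A: "A \<in> carrier_mat n n" and sym: "transpose_mat A = A" and n: "0 < n"
  obtains lam v where "v \<in> carrier_vec n" "v \<bullet> v = 1" "A *\<^sub>v v = lam \<cdot>\<^sub>v v"
proof -
  let ?Ac = "map_mat complex_of_real A"
  have Ac: "?Ac \<in> carrier_mat n n" using A by simp
  have "degree (char_poly ?Ac) = n" using degree_monic_char_poly[OF Ac] by simp
  then obtain z where z: "poly (char_poly ?Ac) z = 0"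
    using fundamental_theorem_of_algebra constant_degree n by (metis not_gr0)
  then have "eigenvalue ?Ac z" using eigenvalue_root_char_poly[OF Ac] by simp
  then obtain u where "eigenvector ?Ac u z" unfolding eigenvalue_def by auto
  then have "z = of_real (Re z)"
    using real_symmetric_eigenvalue_real[OF A sym] by (simp add: Reals_cnj_iff complex_eq_iff)
  then have "of_real (poly (char_poly A) (Re z)) = (0 :: complex)"
    using z of_real_hom.char_poly_hom[OF A] by (metis of_real_hom.poly_map_poly)
  then have "eigenvalue A (Re z)" using eigenvalue_root_char_poly[OF A] by simp
  then obtain w where "eigenvector A w (Re z)" unfolding eigenvalue_def by auto
  then have w: "w \<in> carrier_vec n" "w \<noteq> 0\<^sub>v n" and Aw: "A *\<^sub>v w = Re z \<cdot>\<^sub>v w"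
    using A unfolding eigenvector_def by auto
  define v where "v = (1 / sqrt (w \<bullet> w)) \<cdot>\<^sub>v w"
  have "0 < w \<bullet> w" using conjugate_square_greater_0_vec[OF w(1)] w(2) by simp
  then have "v \<bullet> v = 1"
    unfolding v_def using w by (simp add: scalar_prod_smult_left scalar_prod_smult_right)
  moreover have "A *\<^sub>v v = Re z \<cdot>\<^sub>v v"
    unfolding v_def using A w Aw by (simp add: mult_mat_vec smult_smult_assoc mult.commute)
  moreover have "v \<in> carrier_vec n" unfolding v_def using w by simp
  ultimately show ?thesis using that by blast
qed

definition householder :: "nat \<Rightarrow> real vec \<Rightarrow> real mat" where
  "householder n u = mat n n (\<lambda>(i, j). (if i = j then 1 else 0) - 2 / (u \<bullet> u) * u $ i * u $ j)"

lemma householder_orthogonal: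
  assumes u: "u \<in> carrier_vec n" and u0: "u \<noteq> 0\<^sub>v n"
  shows "transpose_mat (householder n u) * householder n u = 1\<^sub>m n"
proof (rule eq_matI)
  define a where "a = 2 / (u \<bullet> u)"
  define h where "h i j = (if i = j then 1 else 0) - a * u $ i * u $ j" for i j
  have c: "0 < u \<bullet> u" using conjugate_square_greater_0_vec[OF u] u0 by simp
  have uu: "(\<Sum>l = 0..<n. (u $ l)\<^sup>2) = u \<bullet> u"
    using u by (simp add: scalar_prod_def power2_eq_square)
  fix i j assume "i < dim_row (1\<^sub>m n)" and "j < dim_col (1\<^sub>m n)"
  then have i: "i < n" and j: "j < n" by auto
  have hh: "h l i * h l j = (if l = i then (if i = j then 1 else 0) else 0)
      - (if l = j then a * u $ i * u $ l else 0) - (if l = i then a * u $ l * u $ j else 0)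
      + a\<^sup>2 * u $ i * u $ j * (u $ l)\<^sup>2" for l
    unfolding h_def by (auto simp: power2_eq_square algebra_simps)
  have "(transpose_mat (householder n u) * householder n u) $$ (i, j) = (\<Sum>l = 0..<n. h l i * h l j)"
    using i j by (simp add: householder_def scalar_prod_def h_def a_def)
  also have "\<dots> = (\<Sum>l = 0..<n. if l = i then (if i = j then 1 else 0) else 0)
      - (\<Sum>l = 0..<n. if l = j then a * u $ i * u $ l else 0)
      - (\<Sum>l = 0..<n. if l = i then a * u $ l * u $ j else 0)
      + (\<Sum>l = 0..<n. a\<^sup>2 * u $ i * u $ j * (u $ l)\<^sup>2)"
    unfolding hh by (simp add: sum.distrib sum_subtractf)
  also have "\<dots> = (if i = j then 1 else 0) - 2 * a * u $ i * u $ j + a\<^sup>2 * u $ i * u $ j * (u \<bullet> u)"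
    using i j by (simp add: sum_distrib_left[symmetric] uu)
  also have "\<dots> = (if i = j then 1 else 0)"
    unfolding a_def using c by (simp add: power2_eq_square field_simps)
  finally show "(transpose_mat (householder n u) * householder n u) $$ (i, j) = 1\<^sub>m n $$ (i, j)"
    using i j by simp
qed (auto simp: householder_def)

lemma householder_unit_vec:
  assumes v: "v \<in> carrier_vec n" and vv: "v \<bullet> v = 1" and n: "0 < n" and ve: "v - unit_vec n 0 \<noteq> 0\<^sub>v n"
  shows "householder n (v - unit_vec n 0) *\<^sub>v unit_vec n 0 = v"
proof -
  define u where "u = v - unit_vec n 0"
  have u: "u \<in> carrier_vec n" using v unfolding u_def by simp
  have ui: "u $ i = v $ i - (if i = 0 then 1 else 0)" if "i < n" for i
    using v that unfolding u_def by simp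
  have "u \<noteq> 0\<^sub>v n" using ve unfolding u_def .
  then have c: "0 < u \<bullet> u" using conjugate_square_greater_0_vec[OF u] by simp
  have vv': "(\<Sum>l = 0..<n. (v $ l)\<^sup>2) = 1" using vv v unfolding scalar_prod_def by (simp add: power2_eq_square)
  have "u \<bullet> u = (\<Sum>l = 0..<n. (v $ l)\<^sup>2 - 2 * (if l = 0 then v $ l else 0) + (if l = 0 then 1 else 0))"
    unfolding scalar_prod_def using u by (intro sum.cong) (auto simp: ui power2_eq_square algebra_simps)
  also have "\<dots> = 2 - 2 * v $ 0"
    using n by (simp add: sum.distrib sum_subtractf vv' sum_distrib_left[symmetric])
  finally have "u \<bullet> u = - 2 * u $ 0" using ui[OF n] by simp
  with c have scale: "2 / (u \<bullet> u) * u $ 0 = - 1" by (simp add: field_simps)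
  show ?thesis
  proof (rule eq_vecI)
    fix i assume "i < dim_vec v"
    then have i: "i < n" using v by simp
    have "(householder n u *\<^sub>v unit_vec n 0) $ i = householder n u $$ (i, 0)"
      using i n by (simp add: householder_def scalar_prod_right_unit)
    also have "\<dots> = (if i = 0 then 1 else 0) - (2 / (u \<bullet> u) * u $ 0) * u $ i"
      using i n by (simp add: householder_def mult_ac)
    also have "\<dots> = (if i = 0 then 1 else 0) + u $ i" by (simp only: scale)
    also have "\<dots> = v $ i" by (simp add: ui[OF i])
    finally show "(householder n (v - unit_vec n 0) *\<^sub>v unit_vec n 0) $ i = v $ i" unfolding u_def .
  qed (use v in \<open>simp add: householder_def\<close>)
qed

lemma orthogonal_mat_with_first_col:
  fixes v :: "real vec"
  assumes v: "v \<in> carrier_vec n" and vv: "v \<bullet> v = 1" and n: "0 < n"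
  obtains W where "W \<in> carrier_mat n n" "transpose_mat W * W = 1\<^sub>m n" "W *\<^sub>v unit_vec n 0 = v"
proof (cases "v - unit_vec n 0 = 0\<^sub>v n")
  case True
  have "v = unit_vec n 0"
  proof (rule eq_vecI)
    fix i assume "i < dim_vec (unit_vec n 0)"
    then show "v $ i = unit_vec n 0 $ i" using arg_cong[OF True, of "\<lambda>x. x $ i"] v by simp
  qed (use v in simp)
  then show ?thesis using that[of "1\<^sub>m n"] by simp
next
  case False
  show ?thesis
  proof (rule that)
    show "householder n (v - unit_vec n 0) \<in> carrier_mat n n" by (simp add: householder_def)
    show "transpose_mat (householder n (v - unit_vec n 0)) * householder n (v - unit_vec n 0) = 1\<^sub>m n"
      using v False by (intro householder_orthogonal) auto
  qed (rule householder_unit_vec[OF v vv n False])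
qed

lemma symmetric_block_of_eigen_unit_vec:
  fixes A :: "real mat"
  assumes A: "A \<in> carrier_mat (Suc m) (Suc m)" and sym: "transpose_mat A = A"
    and Ae: "A *\<^sub>v unit_vec (Suc m) 0 = lam \<cdot>\<^sub>v unit_vec (Suc m) 0"
  shows "A = four_block_mat (mat 1 1 (\<lambda>_. lam)) (0\<^sub>m 1 m) (0\<^sub>m m 1) (mat m m (\<lambda>(i, j). A $$ (Suc i, Suc j)))"
proof -
  have col0: "A $$ (i, 0) = (if i = 0 then lam else 0)" if "i < Suc m" for i
  proof -
    have "A $$ (i, 0) = (A *\<^sub>v unit_vec (Suc m) 0) $ i" using A that by (simp add: scalar_prod_right_unit)
    then show ?thesis unfolding Ae using that by (simp add: unit_vec_def)
  qed
  have row0: "A $$ (0, j) = (if j = 0 then lam else 0)" if "j < Suc m" for j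
  proof -
    have "A $$ (0, j) = transpose_mat A $$ (j, 0)" using A that by simp
    then show ?thesis unfolding sym using col0[OF that] by simp
  qed
  show ?thesis
    by (rule eq_matI) (use A col0 row0 in \<open>auto simp: less_Suc_eq_0_disj\<close>)
qed

lemma symmetric_orthogonal_deflation:
  fixes A :: "real mat"
  assumes A: "A \<in> carrier_mat (Suc m) (Suc m)" and sym: "transpose_mat A = A"
  obtains W lam B where "W \<in> carrier_mat (Suc m) (Suc m)" "transpose_mat W * W = 1\<^sub>m (Suc m)"
    "B \<in> carrier_mat m m" "transpose_mat B = B"
    "transpose_mat W * A * W = four_block_mat (mat 1 1 (\<lambda>_. lam)) (0\<^sub>m 1 m) (0\<^sub>m m 1) B"
proof -
  let ?e = "unit_vec (Suc m) 0 :: real vec"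
  obtain lam v where v: "v \<in> carrier_vec (Suc m)" and vv: "v \<bullet> v = 1" and Av: "A *\<^sub>v v = lam \<cdot>\<^sub>v v"
    using real_symmetric_unit_eigenvector[OF A sym zero_less_Suc] by blast
  obtain W where W: "W \<in> carrier_mat (Suc m) (Suc m)" and WW: "transpose_mat W * W = 1\<^sub>m (Suc m)"
    and We: "W *\<^sub>v ?e = v"
    using orthogonal_mat_with_first_col[OF v vv] by auto
  define A' where "A' = transpose_mat W * A * W"
  have A': "A' \<in> carrier_mat (Suc m) (Suc m)" unfolding A'_def using W A by simp
  have symA': "transpose_mat A' = A'"
    unfolding A'_def transpose_congruence[OF W A] sym ..
  have "A' *\<^sub>v ?e = transpose_mat W *\<^sub>v (A *\<^sub>v (W *\<^sub>v ?e))"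
    unfolding A'_def using W A by (simp add: assoc_mult_mat_vec[of _ "Suc m" "Suc m" _ "Suc m"])
  also have "\<dots> = lam \<cdot>\<^sub>v (transpose_mat W *\<^sub>v (W *\<^sub>v ?e))"
    unfolding We Av using W v by (simp add: mult_mat_vec)
  also have "transpose_mat W *\<^sub>v (W *\<^sub>v ?e) = ?e"
    using W by (simp add: assoc_mult_mat_vec[of _ "Suc m" "Suc m" _ "Suc m", symmetric] WW)
  finally have eig: "A' *\<^sub>v ?e = lam \<cdot>\<^sub>v ?e" .
  have "A' $$ (j, i) = A' $$ (i, j)" if "i < Suc m" "j < Suc m" for i j
  proof -
    have "A' $$ (j, i) = transpose_mat A' $$ (i, j)" using A' that by simp
    then show ?thesis unfolding symA' .
  qed
  then have B: "transpose_mat (mat m m (\<lambda>(i, j). A' $$ (Suc i, Suc j))) = mat m m (\<lambda>(i, j). A' $$ (Suc i, Suc j))"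
    by (intro eq_matI) auto
  have "transpose_mat W * A * W = four_block_mat (mat 1 1 (\<lambda>_. lam)) (0\<^sub>m 1 m) (0\<^sub>m m 1)
      (mat m m (\<lambda>(i, j). A' $$ (Suc i, Suc j)))"
    using symmetric_block_of_eigen_unit_vec[OF A' symA' eig] unfolding A'_def .
  then show ?thesis using that[OF W WW _ B] by simp
qed

theorem real_symmetric_spectral_decomp:
  assumes "A \<in> carrier_mat n n" and "transpose_mat A = A"
  shows "\<exists>Q d. spectral_decomp n A Q d"
  using assms
proof (induction n arbitrary: A)
  case 0
  then show ?case
    by (intro exI[of _ "1\<^sub>m 0"] exI[of _ "\<lambda>_. 0"]) (auto simp: spectral_decomp_def intro!: eq_matI)
next
  case (Suc m)
  obtain W lam B where W: "W \<in> carrier_mat (Suc m) (Suc m)" and WW: "transpose_mat W * W = 1\<^sub>m (Suc m)"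
    and B: "B \<in> carrier_mat m m" "transpose_mat B = B"
    and WAW: "transpose_mat W * A * W = four_block_mat (mat 1 1 (\<lambda>_. lam)) (0\<^sub>m 1 m) (0\<^sub>m m 1) B"
    using symmetric_orthogonal_deflation[OF Suc.prems] by metis
  obtain Q d where "spectral_decomp m B Q d" using Suc.IH[OF B] by auto
  moreover have "spectral_decomp 1 (mat 1 1 (\<lambda>_. lam)) (1\<^sub>m 1) (\<lambda>_. lam)"
    unfolding spectral_decomp_def by (auto simp: mat_diag_def intro!: eq_matI)
  ultimately obtain Q' d' where "spectral_decomp (Suc m) (transpose_mat W * A * W) Q' d'"
    using spectral_decomp_block_diag unfolding WAW by fastforce
  then have "spectral_decomp (Suc m) (W * (transpose_mat W * A * W) * transpose_mat W) (W * Q') d'"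
    using W WW by (rule spectral_decomp_orthogonal_conj)
  moreover have "W * (transpose_mat W * A * W) * transpose_mat W = A"
  proof -
    have Wt: "transpose_mat W \<in> carrier_mat (Suc m) (Suc m)" using W by simp
    have WWt: "W * transpose_mat W = 1\<^sub>m (Suc m)" by (rule mat_mult_left_right_inverse[OF Wt W WW])
    have "W * (transpose_mat W * A * W) * transpose_mat W = (W * transpose_mat W) * A * (W * transpose_mat W)"
      using W Suc.prems(1) by (simp add: assoc_mult_mat[of _ "Suc m" "Suc m" _ "Suc m" _ "Suc m"] carrier_matD)
    then show ?thesis using Suc.prems(1) by (simp add: WWt)
  qed
  ultimately show ?case by auto
qed

lemma neg_inertia_block_diag:
  fixes A B :: "real mat"
  assumes A: "A \<in> carrier_mat m m" "transpose_mat A = A"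
    and B: "B \<in> carrier_mat p p" "transpose_mat B = B"
  shows "neg_inertia (four_block_mat A (0\<^sub>m m p) (0\<^sub>m p m) B) = neg_inertia A + neg_inertia B"
proof -
  obtain Q1 d1 where 1: "spectral_decomp m A Q1 d1" using real_symmetric_spectral_decomp[OF A] by auto
  obtain Q2 d2 where 2: "spectral_decomp p B Q2 d2" using real_symmetric_spectral_decomp[OF B] by auto
  let ?d = "\<lambda>i. if i < m then d1 i else d2 (i - m)"
  have "neg_inertia (four_block_mat A (0\<^sub>m m p) (0\<^sub>m p m) B) = card {i. i < m + p \<and> ?d i < 0}"
    using neg_inertia_spectral_decomp spectral_decomp_block_diag[OF 1 2] by blast
  also have "{i. i < m + p \<and> ?d i < 0} = {i. i < m \<and> d1 i < 0} \<union> (\<lambda>i. i + m) ` {i. i < p \<and> d2 i < 0}"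
    (is "_ = ?X \<union> ?Y")
  proof (intro equalityI subsetI)
    fix x assume "x \<in> {i. i < m + p \<and> ?d i < 0}"
    then show "x \<in> ?X \<union> ?Y" by (cases "x < m") (auto simp: image_iff intro!: exI[of _ "x - m"])
  qed auto
  also have "card \<dots> = card {i. i < m \<and> d1 i < 0} + card {i. i < p \<and> d2 i < 0}"
    by (subst card_Un_disjoint) (auto simp: card_image inj_on_def)
  finally show ?thesis using neg_inertia_spectral_decomp[OF 1] neg_inertia_spectral_decomp[OF 2] by simp
qed

lemma neg_inertia_negative_definite:
  fixes A :: "real mat"
  assumes A: "A \<in> carrier_mat n n" and sym: "transpose_mat A = A"
    and neg: "\<And>x. x \<in> carrier_vec n \<Longrightarrow> x \<noteq> 0\<^sub>v n \<Longrightarrow> x \<bullet> (A *\<^sub>v x) < 0"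
  shows "neg_inertia A = n"
proof -
  obtain Q d where sd: "spectral_decomp n A Q d" using real_symmetric_spectral_decomp[OF A sym] by auto
  then have Q: "Q \<in> carrier_mat n n" and QQ: "transpose_mat Q * Q = 1\<^sub>m n"
    unfolding spectral_decomp_def by auto
  have Qt: "transpose_mat Q \<in> carrier_mat n n" using Q by simp
  have "d i < 0" if i: "i < n" for i
  proof -
    let ?u = "Q *\<^sub>v unit_vec n i"
    have Qt_u: "transpose_mat Q *\<^sub>v ?u = unit_vec n i"
      using Q Qt by (simp add: assoc_mult_mat_vec[of _ n n _ n, symmetric] QQ)
    have "?u \<noteq> 0\<^sub>v n"
    proof
      assume "?u = 0\<^sub>v n"
      then have "unit_vec n i = transpose_mat Q *\<^sub>v 0\<^sub>v n" using Qt_u by simp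
      also have "\<dots> = 0\<^sub>v n" using Qt by (intro eq_vecI) auto
      finally have "unit_vec n i $ i = (0\<^sub>v n :: real vec) $ i" by simp
      then show False using i by simp
    qed
    then have "?u \<bullet> (A *\<^sub>v ?u) < 0" using neg Q by simp
    also have "?u \<bullet> (A *\<^sub>v ?u) = unit_vec n i \<bullet> ((transpose_mat Q * A * Q) *\<^sub>v unit_vec n i)"
      using quadratic_form_congruence[OF Q A, of "unit_vec n i"] by simp
    also have "\<dots> = (\<Sum>l = 0..<n. d l * (unit_vec n i $ l)\<^sup>2)"
      unfolding spectral_decomp_diag[OF sd] by (rule quadratic_form_mat_diag) simp
    also have "\<dots> = (\<Sum>l = 0..<n. if l = i then d i else 0)" by (intro sum.cong) (auto simp: unit_vec_def)
    also have "\<dots> = d i" using i by simp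
    finally show ?thesis .
  qed
  then have "{i. i < n \<and> d i < 0} = {..<n}" by auto
  then show ?thesis using neg_inertia_spectral_decomp[OF sd] by simp
qed

section \<open>Sylvester's law of inertia\<close>

lemma orthogonalize_at_coord:
  fixes g y :: "'a :: field vec"
  assumes g: "g \<in> carrier_vec n" and y: "y \<in> carrier_vec n" "y \<noteq> 0\<^sub>v n"
    and j: "j < n" "g $ j \<noteq> 0" and yj: "y $ j = 0"
  obtains x where "x \<in> carrier_vec n" "x \<noteq> 0\<^sub>v n" "\<And>l. l < n \<Longrightarrow> l \<noteq> j \<Longrightarrow> x $ l = y $ l"
    "\<And>h. h \<in> carrier_vec n \<Longrightarrow> h \<bullet> x = (h - (h $ j / g $ j) \<cdot>\<^sub>v g) \<bullet> y" "g \<bullet> x = 0"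
proof -
  define x where "x = y - (g \<bullet> y / g $ j) \<cdot>\<^sub>v unit_vec n j"
  have x: "x \<in> carrier_vec n" unfolding x_def using y by simp
  have xl: "x $ l = y $ l" if "l < n" "l \<noteq> j" for l
    unfolding x_def using y that j by (simp add: unit_vec_def)
  have hx: "h \<bullet> x = (h - (h $ j / g $ j) \<cdot>\<^sub>v g) \<bullet> y" if h: "h \<in> carrier_vec n" for h
    unfolding x_def using g h y j by (simp add: scalar_prod_minus_distrib[of _ n] minus_scalar_prod_distrib[of _ n]
      scalar_prod_smult_left scalar_prod_smult_right scalar_prod_right_unit ac_simps)
  have "g \<bullet> x = 0" using hx[OF g] g y j by simp
  obtain l where l: "l < n" "y $ l \<noteq> 0"
    using y by (metis carrier_vecD eq_vecI index_zero_vec(1) index_zero_vec(2))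
  then have "l \<noteq> j" using yj by auto
  then have "x $ l \<noteq> 0" using xl l by simp
  then have "x \<noteq> 0\<^sub>v n" using l by auto
  show ?thesis by (rule that[OF x \<open>x \<noteq> 0\<^sub>v n\<close> xl hx \<open>g \<bullet> x = 0\<close>])
qed

lemma exists_supported_orthogonal_vec:
  fixes g :: "nat \<Rightarrow> 'a :: field vec"
  assumes "finite I" and "J \<subseteq> {..<n}" and "card I < card J" and "\<forall>i\<in>I. g i \<in> carrier_vec n"
  shows "\<exists>x \<in> carrier_vec n. x \<noteq> 0\<^sub>v n \<and> (\<forall>j<n. j \<notin> J \<longrightarrow> x $ j = 0) \<and> (\<forall>i\<in>I. g i \<bullet> x = 0)"
  using assms
proof (induction I arbitrary: J g rule: finite_induct)
  case empty
  then have "J \<noteq> {}" by auto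
  then obtain j where j: "j \<in> J" "j < n" using empty.prems(1) by auto
  then have "unit_vec n j \<noteq> (0\<^sub>v n :: 'a vec)" by (metis index_unit_vec(1) index_zero_vec(1) one_neq_zero)
  with j show ?case by (intro bexI[of _ "unit_vec n j"]) (auto simp: unit_vec_def)
next
  case (insert i I)
  have gi: "g i \<in> carrier_vec n" using insert.prems by auto
  show ?case
  proof (cases "\<forall>j\<in>J. g i $ j = 0")
    case True
    have "card I < card J" using insert.prems(2) insert.hyps by simp
    then obtain x where x: "x \<in> carrier_vec n" "x \<noteq> 0\<^sub>v n" "\<forall>j<n. j \<notin> J \<longrightarrow> x $ j = 0"
      "\<forall>l\<in>I. g l \<bullet> x = 0" using insert.IH[OF insert.prems(1), of g] insert.prems(3) by auto
    have "g i \<bullet> x = 0"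
      unfolding scalar_prod_def using x gi True by (intro sum.neutral) auto
    with x show ?thesis by auto
  next
    case False
    then obtain j where j: "j \<in> J" "g i $ j \<noteq> 0" by auto
    have jn: "j < n" using j insert.prems by auto
    have "card I < card (J - {j})"
      using insert j finite_subset[OF insert.prems(1)] by (simp add: card_Diff_singleton)
    then obtain y where y: "y \<in> carrier_vec n" "y \<noteq> 0\<^sub>v n" "\<forall>l<n. l \<notin> J - {j} \<longrightarrow> y $ l = 0"
      and orth: "\<forall>l\<in>I. (g l - (g l $ j / g i $ j) \<cdot>\<^sub>v g i) \<bullet> y = 0"
      using insert.IH[of "J - {j}" "\<lambda>l. g l - (g l $ j / g i $ j) \<cdot>\<^sub>v g i"] insert.prems gi by auto
    obtain x where x: "x \<in> carrier_vec n" "x \<noteq> 0\<^sub>v n" and xl: "\<And>l. l < n \<Longrightarrow> l \<noteq> j \<Longrightarrow> x $ l = y $ l"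
      and hx: "\<And>h. h \<in> carrier_vec n \<Longrightarrow> h \<bullet> x = (h - (h $ j / g i $ j) \<cdot>\<^sub>v g i) \<bullet> y"
      and "g i \<bullet> x = 0"
      using orthogonalize_at_coord[OF gi y(1,2) jn j(2)] y(3) jn by blast
    moreover have "g l \<bullet> x = 0" if "l \<in> I" for l
      using that orth hx insert.prems(3) by auto
    moreover have "x $ l = 0" if "l < n" "l \<notin> J" for l
      using that xl[of l] y(3) j(1) by auto
    ultimately show ?thesis by auto
  qed
qed

lemma card_neg_le_of_diag_congruence:
  fixes M :: "real mat"
  assumes M: "M \<in> carrier_mat n n" and eq: "mat_diag n e = transpose_mat M * mat_diag n d * M"
  shows "card {i. i < n \<and> e i < 0} \<le> card {i. i < n \<and> d i < 0}"
proof (rule ccontr)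
  \<comment> \<open>Otherwise some \<open>x \<noteq> 0\<close> lives where \<open>e < 0\<close> while \<open>M x\<close> vanishes where \<open>d < 0\<close>; then the
    form is negative on \<open>x\<close> in the \<open>e\<close>-coordinates and nonnegative on \<open>M x\<close> in the \<open>d\<close>-coordinates.\<close>
  assume "\<not> ?thesis"
  then have "\<exists>x \<in> carrier_vec n. x \<noteq> 0\<^sub>v n \<and> (\<forall>j<n. j \<notin> {i. i < n \<and> e i < 0} \<longrightarrow> x $ j = 0) \<and>
      (\<forall>i \<in> {i. i < n \<and> d i < 0}. row M i \<bullet> x = 0)"
    by (intro exists_supported_orthogonal_vec) (use M in auto)
  then obtain x where x: "x \<in> carrier_vec n" "x \<noteq> 0\<^sub>v n"
    and supp: "\<And>j. j < n \<Longrightarrow> \<not> e j < 0 \<Longrightarrow> x $ j = 0"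
    and ker: "\<And>i. i < n \<Longrightarrow> d i < 0 \<Longrightarrow> row M i \<bullet> x = 0"
    by auto
  obtain j where j: "j < n" "x $ j \<noteq> 0"
    using x by (metis carrier_vecD eq_vecI index_zero_vec(1) index_zero_vec(2))
  have "0 < (\<Sum>i = 0..<n. - (e i * (x $ i)\<^sup>2))"
  proof (rule sum_pos2[of _ j])
    have "e j < 0" using supp[OF j(1)] j(2) by blast
    then show "0 < - (e j * (x $ j)\<^sup>2)" using mult_neg_pos[of "e j" "(x $ j)\<^sup>2"] j(2) by simp
  next
    fix i assume "i \<in> {0..<n}"
    then show "0 \<le> - (e i * (x $ i)\<^sup>2)" using supp[of i] by (cases "e i < 0") (auto simp: mult_nonpos_nonneg)
  qed (use j in auto)
  then have "(\<Sum>i = 0..<n. e i * (x $ i)\<^sup>2) < 0" by (simp add: sum_negf)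
  moreover have "(\<Sum>i = 0..<n. e i * (x $ i)\<^sup>2) = (\<Sum>i = 0..<n. d i * ((M *\<^sub>v x) $ i)\<^sup>2)"
    using quadratic_form_mat_diag[OF x(1), of e] quadratic_form_congruence[OF M mat_diag_dim x(1), of d]
      quadratic_form_mat_diag[of "M *\<^sub>v x" n d] M x
    unfolding eq by simp
  moreover have "0 \<le> d i * ((M *\<^sub>v x) $ i)\<^sup>2" if "i < n" for i
    using ker[OF that] M that by (cases "d i < 0") auto
  then have "0 \<le> (\<Sum>i = 0..<n. d i * ((M *\<^sub>v x) $ i)\<^sup>2)" by (intro sum_nonneg) auto
  ultimately show False by simp
qed

lemma neg_inertia_congruence_le:
  fixes A S :: "real mat"
  assumes A: "A \<in> carrier_mat n n" and sym: "transpose_mat A = A" and S: "S \<in> carrier_mat n n"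
  shows "neg_inertia (transpose_mat S * A * S) \<le> neg_inertia A"
proof -
  let ?B = "transpose_mat S * A * S"
  have B: "?B \<in> carrier_mat n n" using S A by simp
  have symB: "transpose_mat ?B = ?B" unfolding transpose_congruence[OF S A] sym ..
  obtain Q d where sdA: "spectral_decomp n A Q d" using real_symmetric_spectral_decomp[OF A sym] by auto
  obtain P e where sdB: "spectral_decomp n ?B P e" using real_symmetric_spectral_decomp[OF B symB] by auto
  have Q: "Q \<in> carrier_mat n n" and Aeq: "A = Q * mat_diag n d * transpose_mat Q"
    and P: "P \<in> carrier_mat n n" using sdA sdB unfolding spectral_decomp_def by auto
  define M where "M = transpose_mat Q * S * P"
  have M: "M \<in> carrier_mat n n" unfolding M_def using Q S P by simp
  have tM: "transpose_mat M = transpose_mat P * transpose_mat S * Q"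
    unfolding M_def using Q S P by (simp add: transpose_mult[of _ n n _ n] assoc_mult_mat[of _ n n _ n _ n])
  have "mat_diag n e = transpose_mat P * ?B * P" by (rule spectral_decomp_diag[OF sdB, symmetric])
  also have "\<dots> = transpose_mat M * mat_diag n d * M"
    unfolding tM unfolding M_def Aeq using P S Q by (simp add: assoc_mult_mat[of _ n n _ n _ n] carrier_matD)
  finally have "card {i. i < n \<and> e i < 0} \<le> card {i. i < n \<and> d i < 0}"
    by (rule card_neg_le_of_diag_congruence[OF M])
  then show ?thesis
    unfolding neg_inertia_spectral_decomp[OF sdA] neg_inertia_spectral_decomp[OF sdB] .
qed

theorem neg_inertia_congruence:
  fixes A S R :: "real mat"
  assumes A: "A \<in> carrier_mat n n" and sym: "transpose_mat A = A"
    and S: "S \<in> carrier_mat n n" and R: "R \<in> carrier_mat n n" and SR: "S * R = 1\<^sub>m n"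
  shows "neg_inertia (transpose_mat S * A * S) = neg_inertia A"
proof -
  let ?B = "transpose_mat S * A * S"
  have B: "?B \<in> carrier_mat n n" using S A by simp
  have symB: "transpose_mat ?B = ?B" unfolding transpose_congruence[OF S A] sym ..
  have RS: "transpose_mat R * transpose_mat S = 1\<^sub>m n"
    using transpose_mult[OF S R] SR by simp
  have "transpose_mat R * ?B * R = (transpose_mat R * transpose_mat S) * A * (S * R)"
    using R S A by (simp add: assoc_mult_mat[of _ n n _ n _ n] carrier_matD)
  then have "transpose_mat R * ?B * R = A" using A by (simp add: RS SR)
  then show ?thesis
    using neg_inertia_congruence_le[OF B symB R] neg_inertia_congruence_le[OF A sym S] by simp
qed

section \<open>Repeating the last row and column of a symmetric matrix\<close>

definition pendant_blowup :: "nat \<Rightarrow> nat \<Rightarrow> real \<Rightarrow> real mat \<Rightarrow> real mat" where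
  "pendant_blowup n k c T = mat (n + k) (n + k) (\<lambda>(r, l).
     if n \<le> r \<and> n \<le> l then (if r = l then 0 else c) else T $$ (min r n, min l n))"

definition pendant_basis :: "nat \<Rightarrow> nat \<Rightarrow> real mat" where
  "pendant_basis n k = mat (n + k) (n + k) (\<lambda>(r, l).
     if l < n then of_bool (r = l)
     else if l = n then (if n \<le> r then 1 / real k else 0)
     else of_bool (r = l) - of_bool (r = n))"

definition pendant_coord :: "nat \<Rightarrow> nat \<Rightarrow> nat \<Rightarrow> (nat \<Rightarrow> real) \<Rightarrow> real" where
  "pendant_coord n k l g =
     (if l < n then g l else if l = n then (\<Sum>r = n..<n + k. g r) / real k else g l - g n)"

lemma sum_pendant_basis_col:
  assumes l: "l < n + k"
  shows "(\<Sum>r = 0..<n + k. pendant_basis n k $$ (r, l) * g r) = pendant_coord n k l g"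
proof -
  consider "l < n" | "l = n" | "n < l" by linarith
  then show ?thesis
  proof cases
    case 1
    then have "(\<Sum>r = 0..<n + k. pendant_basis n k $$ (r, l) * g r) = (\<Sum>r = 0..<n + k. if r = l then g r else 0)"
      using l by (intro sum.cong) (auto simp: pendant_basis_def)
    then show ?thesis using 1 by (simp add: pendant_coord_def)
  next
    case 2
    have "(\<Sum>r = 0..<n + k. pendant_basis n k $$ (r, l) * g r) = (\<Sum>r = n..<n + k. g r / real k)"
      using 2 l by (intro sum.mono_neutral_cong_right) (auto simp: pendant_basis_def)
    then show ?thesis using 2 by (simp add: pendant_coord_def sum_divide_distrib)
  next
    case 3
    have "(\<Sum>r = 0..<n + k. pendant_basis n k $$ (r, l) * g r) =
        (\<Sum>r = 0..<n + k. if r = l then g r else 0) - (\<Sum>r = 0..<n + k. if r = n then g r else 0)"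
      unfolding sum_subtractf[symmetric] using 3 l by (intro sum.cong) (auto simp: pendant_basis_def)
    then show ?thesis using 3 l by (simp add: pendant_coord_def)
  qed
qed

lemma pendant_coord_cong:
  assumes "l < n + k" and "\<And>r. r < n + k \<Longrightarrow> g r = h r"
  shows "pendant_coord n k l g = pendant_coord n k l h"
  using assms unfolding pendant_coord_def by (auto intro!: sum.cong)

lemma pendant_coord_retract:
  assumes "0 < k" and "l < n + k"
  shows "pendant_coord n k l (\<lambda>r. g (min r n)) = (if l \<le> n then g l else 0)"
proof -
  have "(\<Sum>r = n..<n + k. g (min r n)) = (\<Sum>r = n..<n + k. g n)" by (intro sum.cong) auto
  then show ?thesis using assms by (auto simp: pendant_coord_def)
qed

lemma pendant_basis_right_inverse:
  assumes k: "0 < k"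
  obtains R where "R \<in> carrier_mat (n + k) (n + k)" "pendant_basis n k * R = 1\<^sub>m (n + k)"
proof -
  let ?S = "pendant_basis n k"
  define R where "R = mat (n + k) (n + k) (\<lambda>(r, l).
    if l < n then of_bool (r = l) else of_bool (r = n) + of_bool (n < r \<and> r = l) - (if n < r then 1 / real k else 0))"
  have R: "R \<in> carrier_mat (n + k) (n + k)" and S: "?S \<in> carrier_mat (n + k) (n + k)"
    unfolding R_def pendant_basis_def by auto
  have "R * ?S = 1\<^sub>m (n + k)"
  proof (rule eq_matI)
    fix r c assume "r < dim_row (1\<^sub>m (n + k))" and "c < dim_col (1\<^sub>m (n + k))"
    then have r: "r < n + k" and c: "c < n + k" by auto
    have "(\<Sum>l = n..<n + k. of_bool (n < r \<and> r = l)) = (of_bool (n < r) :: real)"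
      using r by (cases "n < r") (auto simp: of_bool_def sum.delta)
    then have pendants: "(\<Sum>l = n..<n + k. R $$ (r, l)) = real k * of_bool (r = n)"
      using r k by (simp add: R_def sum.distrib sum_subtractf)
    have "(R * ?S) $$ (r, c) = (\<Sum>l = 0..<n + k. ?S $$ (l, c) * R $$ (r, l))"
      using r c R S by (auto simp: scalar_prod_def mult.commute intro!: sum.cong)
    also have "\<dots> = pendant_coord n k c (\<lambda>l. R $$ (r, l))" by (rule sum_pendant_basis_col[OF c])
    also have "\<dots> = of_bool (r = c)"
    proof (cases "c = n")
      case True
      then show ?thesis using k by (simp add: pendant_coord_def pendants)
    next
      case False
      then show ?thesis using r c by (auto simp: pendant_coord_def R_def)
    qed
    finally show "(R * ?S) $$ (r, c) = 1\<^sub>m (n + k) $$ (r, c)" using r c by simp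
  qed (use R S in auto)
  then have "?S * R = 1\<^sub>m (n + k)" by (rule mat_mult_left_right_inverse[OF R S])
  with R show ?thesis by (rule that)
qed

lemma pendant_blowup_carrier: "pendant_blowup n k c T \<in> carrier_mat (n + k) (n + k)"
  unfolding pendant_blowup_def by simp

lemma pendant_blowup_symmetric:
  assumes "T \<in> carrier_mat (n + 1) (n + 1)" and "transpose_mat T = T"
  shows "transpose_mat (pendant_blowup n k c T) = pendant_blowup n k c T"
proof (rule eq_matI)
  fix i j assume "i < dim_row (pendant_blowup n k c T)" "j < dim_col (pendant_blowup n k c T)"
  moreover have "T $$ (min j n, min i n) = T $$ (min i n, min j n)"
    using assms by (metis index_transpose_mat(1) carrier_matD le_imp_less_Suc min.cobounded2 Suc_eq_plus1)
  ultimately show "transpose_mat (pendant_blowup n k c T) $$ (i, j) = pendant_blowup n k c T $$ (i, j)"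
    by (auto simp: pendant_blowup_def)
qed (auto simp: pendant_blowup_def)

lemma pendant_blowup_cong:
  assumes "\<And>i j. i \<le> n \<Longrightarrow> j \<le> n \<Longrightarrow> \<not> (i = n \<and> j = n) \<Longrightarrow> T $$ (i, j) = T' $$ (i, j)"
  shows "pendant_blowup n k c T = pendant_blowup n k c T'"
  unfolding pendant_blowup_def using assms by (intro eq_matI) auto

lemma pendant_blowup_congruence:
  assumes k: "0 < k" and T: "T \<in> carrier_mat (n + 1) (n + 1)" and Tnn: "T $$ (n, n) = c - c / real k"
  shows "transpose_mat (pendant_basis n k) * pendant_blowup n k c T * pendant_basis n k =
    four_block_mat T (0\<^sub>m (n + 1) (k - 1)) (0\<^sub>m (k - 1) (n + 1))
      (mat (k - 1) (k - 1) (\<lambda>(i, j). - c * (of_bool (i = j) + 1)))"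
  (is "transpose_mat ?S * ?D * ?S = ?B")
proof (rule eq_matI)
  have dims: "n + 1 + (k - 1) = n + k" using k by simp
  fix a b assume "a < dim_row ?B" and "b < dim_col ?B"
  then have a: "a < n + k" and b: "b < n + k" using T dims by auto
  have pendant_rows: "(\<Sum>r = n..<n + k. ?D $$ (r, l)) = real k * c - c" if "n \<le> l" "l < n + k" for l
  proof -
    have "(\<Sum>r = n..<n + k. ?D $$ (r, l)) = (\<Sum>r = n..<n + k. c - (if r = l then c else 0))"
      using that by (intro sum.cong) (auto simp: pendant_blowup_def)
    then show ?thesis using that by (simp add: sum_subtractf)
  qed
  have inner: "pendant_coord n k a (\<lambda>r. ?D $$ (r, l)) =
      (if a \<le> n then T $$ (a, min l n) else if l < n then 0 else c * (of_bool (l = n) - of_bool (l = a)))"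
    if l: "l < n + k" for l
    using a l k pendant_rows[of l] Tnn
    by (auto simp: pendant_coord_def pendant_blowup_def field_simps)
  have "(transpose_mat ?S * ?D * ?S) $$ (a, b) =
      (\<Sum>l = 0..<n + k. ?S $$ (l, b) * (\<Sum>r = 0..<n + k. ?S $$ (r, a) * ?D $$ (r, l)))"
    using a b by (auto simp: pendant_basis_def pendant_blowup_def scalar_prod_def mult.commute intro!: sum.cong)
  also have "\<dots> = pendant_coord n k b (\<lambda>l. pendant_coord n k a (\<lambda>r. ?D $$ (r, l)))"
    using a b by (simp add: sum_pendant_basis_col)
  also have "\<dots> = pendant_coord n k b (\<lambda>l.
      if a \<le> n then T $$ (a, min l n) else if l < n then 0 else c * (of_bool (l = n) - of_bool (l = a)))"
    using b inner by (rule pendant_coord_cong)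
  also have "\<dots> = ?B $$ (a, b)"
  proof (cases "a \<le> n")
    case True
    then show ?thesis using pendant_coord_retract[OF k b, of "\<lambda>l. T $$ (a, l)"] a b T k by auto
  next
    case False
    have "(\<Sum>l = n..<n + k. c * (of_bool (l = n) - of_bool (l = a))) = c * (1 - 1)"
      using False a k by (simp add: sum_distrib_left[symmetric] sum_subtractf of_bool_def sum.delta)
    then show ?thesis using False a b T k by (auto simp: pendant_coord_def)
  qed
  finally show "(transpose_mat ?S * ?D * ?S) $$ (a, b) = ?B $$ (a, b)" .
qed (use k T in \<open>auto simp: pendant_basis_def pendant_blowup_def\<close>)

lemma quadratic_form_minus_I_plus_J:
  fixes y :: "real vec"
  assumes y: "y \<in> carrier_vec m"
  shows "y \<bullet> (mat m m (\<lambda>(i, j). - c * (of_bool (i = j) + 1)) *\<^sub>v y) = - c * (y \<bullet> y + (\<Sum>i = 0..<m. y $ i)\<^sup>2)"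
proof -
  let ?L = "mat m m (\<lambda>(i, j). - c * (of_bool (i = j) + 1))"
  let ?s = "\<Sum>j = 0..<m. y $ j"
  have Ly: "(?L *\<^sub>v y) $ i = - c * (y $ i + ?s)" if i: "i < m" for i
  proof -
    have "(?L *\<^sub>v y) $ i = (\<Sum>j = 0..<m. - c * (of_bool (i = j) + 1) * y $ j)"
      using i y by (simp add: scalar_prod_def)
    also have "\<dots> = (\<Sum>j = 0..<m. (if j = i then - c * y $ j else 0) - c * y $ j)"
      by (intro sum.cong) (auto simp: algebra_simps)
    also have "\<dots> = - c * (y $ i + ?s)"
      using i by (simp add: sum_subtractf sum_distrib_left sum_negf algebra_simps)
    finally show ?thesis .
  qed
  have "?L *\<^sub>v y = (- c) \<cdot>\<^sub>v (y + ?s \<cdot>\<^sub>v vec m (\<lambda>_. 1))"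
  proof (rule eq_vecI)
    fix i assume "i < dim_vec ((- c) \<cdot>\<^sub>v (y + ?s \<cdot>\<^sub>v vec m (\<lambda>_. 1)))"
    then have i: "i < m" using y by simp
    show "(?L *\<^sub>v y) $ i = ((- c) \<cdot>\<^sub>v (y + ?s \<cdot>\<^sub>v vec m (\<lambda>_. 1))) $ i"
      unfolding Ly[OF i] using i y by simp
  qed (use y in simp)
  moreover have "y \<bullet> vec m (\<lambda>_. 1) = ?s" using y by (simp add: scalar_prod_def)
  ultimately show ?thesis
    using y by (simp add: scalar_prod_add_distrib[of _ m] power2_eq_square algebra_simps)
qed

theorem neg_inertia_pendant_blowup:
  assumes k: "2 \<le> k" and c: "0 < c"
    and T: "T \<in> carrier_mat (n + 1) (n + 1)" and symT: "transpose_mat T = T"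
    and Tnn: "T $$ (n, n) = c - c / real k"
  shows "neg_inertia (pendant_blowup n k c T) = k - 1 + neg_inertia T"
proof -
  let ?S = "pendant_basis n k"
  let ?D = "pendant_blowup n k c T"
  let ?L = "mat (k - 1) (k - 1) (\<lambda>(i, j). - c * (of_bool (i = j) + 1))"
  have k0: "0 < k" using k by simp
  have S: "?S \<in> carrier_mat (n + k) (n + k)" unfolding pendant_basis_def by simp
  obtain R where R: "R \<in> carrier_mat (n + k) (n + k)" and SR: "?S * R = 1\<^sub>m (n + k)"
    using pendant_basis_right_inverse[OF k0] by blast
  have symL: "transpose_mat ?L = ?L" by (rule eq_matI) auto
  have negL: "y \<bullet> (?L *\<^sub>v y) < 0" if "y \<in> carrier_vec (k - 1)" "y \<noteq> 0\<^sub>v (k - 1)" for y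
  proof -
    have "0 < y \<bullet> y" using conjugate_square_greater_0_vec[OF that(1)] that(2) by simp
    then show ?thesis unfolding quadratic_form_minus_I_plus_J[OF that(1)]
      using c by (simp add: add_pos_nonneg mult_neg_pos)
  qed
  have "neg_inertia ?D = neg_inertia (transpose_mat ?S * ?D * ?S)"
    using neg_inertia_congruence[OF pendant_blowup_carrier pendant_blowup_symmetric[OF T symT] S R SR] ..
  also have "\<dots> = neg_inertia T + neg_inertia ?L"
    unfolding pendant_blowup_congruence[OF k0 T Tnn]
    by (rule neg_inertia_block_diag[OF T symT]) (auto simp: symL)
  also have "neg_inertia ?L = k - 1"
    by (rule neg_inertia_negative_definite[OF _ symL negL]) auto
  finally show ?thesis by simp
qed

section \<open>Distances in a graph with pendant vertices\<close>

lemma is_walk_rev: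
  assumes "is_walk N Adj xs" and sym: "\<And>a b. Adj a b \<Longrightarrow> Adj b a"
  shows "is_walk N Adj (rev xs)"
  unfolding is_walk_def
proof (intro conjI allI impI)
  show "rev xs \<noteq> []" and "set (rev xs) \<subseteq> {..<N}" using assms(1) unfolding is_walk_def by auto
  fix i assume i: "Suc i < length (rev xs)"
  then have "Adj (xs ! (length xs - Suc (Suc i))) (xs ! Suc (length xs - Suc (Suc i)))"
    using assms(1) unfolding is_walk_def by auto
  moreover have "Suc (length xs - Suc (Suc i)) = length xs - Suc i" using i by simp
  ultimately show "Adj (rev xs ! i) (rev xs ! Suc i)" using i sym by (simp add: rev_nth)
qed

lemma is_walk_snoc:
  assumes xs: "is_walk N Adj xs" and b: "Adj (last xs) b" "b < N"
  shows "is_walk N Adj (xs @ [b])"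
  unfolding is_walk_def
proof (intro conjI allI impI)
  show "xs @ [b] \<noteq> []" and "set (xs @ [b]) \<subseteq> {..<N}" using xs b unfolding is_walk_def by auto
  fix i assume i: "Suc i < length (xs @ [b])"
  have ne: "xs \<noteq> []" using xs unfolding is_walk_def by auto
  show "Adj ((xs @ [b]) ! i) ((xs @ [b]) ! Suc i)"
  proof (cases "Suc i < length xs")
    case True
    then show ?thesis using xs unfolding is_walk_def by (auto simp: nth_append)
  next
    case False
    then have "Suc i = length xs" using i by simp
    moreover from this have "i = length xs - 1" by simp
    ultimately have "(xs @ [b]) ! i = last xs" and "(xs @ [b]) ! Suc i = b"
      using ne by (simp_all add: nth_append last_conv_nth)
    then show ?thesis using b by simp
  qed
qed

lemma is_walk_map:
  assumes "is_walk N1 Adj1 xs"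
    and "\<And>a b. a < N1 \<Longrightarrow> b < N1 \<Longrightarrow> Adj1 a b \<Longrightarrow> Adj2 (f a) (f b)"
    and "\<And>a. a < N1 \<Longrightarrow> f a < N2"
  shows "is_walk N2 Adj2 (map f xs)"
  using assms unfolding is_walk_def by (auto simp: subset_iff)

lemma gdist_le_walk:
  assumes "is_walk N Adj xs" and "hd xs = u" and "last xs = v"
  shows "gdist N Adj u v \<le> length xs - 1"
proof -
  have "length xs = Suc (length xs - 1)" using assms(1) unfolding is_walk_def by auto
  then show ?thesis unfolding gdist_def using assms by (intro Least_le) blast
qed

lemma gdist_shortest_walk:
  assumes "is_walk N Adj xs" and "hd xs = u" and "last xs = v"
  obtains ys where "is_walk N Adj ys" "hd ys = u" "last ys = v" "length ys = Suc (gdist N Adj u v)"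
proof -
  have "length xs = Suc (length xs - 1)" using assms(1) unfolding is_walk_def by auto
  then have "\<exists>l ys. is_walk N Adj ys \<and> hd ys = u \<and> last ys = v \<and> length ys = Suc l" using assms by blast
  then have "\<exists>ys. is_walk N Adj ys \<and> hd ys = u \<and> last ys = v \<and> length ys = Suc (gdist N Adj u v)"
    unfolding gdist_def by (rule LeastI_ex)
  then show ?thesis using that by blast
qed

lemma gdist_hom_le:
  assumes "is_walk N1 Adj1 xs" and "hd xs = u" and "last xs = v"
    and "\<And>a b. a < N1 \<Longrightarrow> b < N1 \<Longrightarrow> Adj1 a b \<Longrightarrow> Adj2 (f a) (f b)"
    and "\<And>a. a < N1 \<Longrightarrow> f a < N2"
  shows "gdist N2 Adj2 (f u) (f v) \<le> gdist N1 Adj1 u v"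
proof -
  obtain ys where ys: "is_walk N1 Adj1 ys" "hd ys = u" "last ys = v" "length ys = Suc (gdist N1 Adj1 u v)"
    using gdist_shortest_walk[OF assms(1-3)] .
  have "ys \<noteq> []" using ys(1) unfolding is_walk_def by auto
  then have "gdist N2 Adj2 (f u) (f v) \<le> length (map f ys) - 1"
    using ys by (intro gdist_le_walk[OF is_walk_map[of N1 Adj1 ys Adj2 f N2, OF ys(1) assms(4,5)]])
      (auto simp: hd_map last_map)
  then show ?thesis using ys(4) by simp
qed

lemma gdist_sym:
  assumes sym: "\<And>a b. Adj a b \<Longrightarrow> Adj b a"
  shows "gdist N Adj u v = gdist N Adj v u"
proof -
  have rev: "\<exists>ys. is_walk N Adj ys \<and> hd ys = v \<and> last ys = u \<and> length ys = Suc l"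
    if "is_walk N Adj xs" "hd xs = u" "last xs = v" "length xs = Suc l" for xs u v l
    using that is_walk_rev[OF that(1) sym] by (intro exI[of _ "rev xs"]) (auto simp: hd_rev last_rev)
  have "(\<exists>xs. is_walk N Adj xs \<and> hd xs = u \<and> last xs = v \<and> length xs = Suc l) \<longleftrightarrow>
        (\<exists>xs. is_walk N Adj xs \<and> hd xs = v \<and> last xs = u \<and> length xs = Suc l)" for l
    using rev by blast
  then show ?thesis unfolding gdist_def by simp
qed

lemma gdist_self: "u < N \<Longrightarrow> gdist N Adj u u = 0"
  using gdist_le_walk[of N Adj "[u]" u u] by (simp add: is_walk_def)

lemma gdist_eq_2:
  assumes "is_walk N Adj [u, x, v]" and "u \<noteq> v" and "\<not> Adj u v"
  shows "gdist N Adj u v = 2"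
proof -
  have "gdist N Adj u v \<le> 2" using gdist_le_walk[OF assms(1), of u v] by simp
  moreover obtain ys where ys: "is_walk N Adj ys" "hd ys = u" "last ys = v" "length ys = Suc (gdist N Adj u v)"
    using gdist_shortest_walk[OF assms(1)] by auto
  have "gdist N Adj u v \<noteq> 0"
    using ys assms(2) by (metis One_nat_def hd_conv_nth last_conv_nth diff_Suc_1 length_greater_0_conv zero_less_Suc)
  moreover have "gdist N Adj u v \<noteq> 1"
  proof
    assume "gdist N Adj u v = 1"
    then obtain a b where "ys = [a, b]" using ys(4) by (auto simp: length_Suc_conv)
    then show False using ys(1-3) assms(3) unfolding is_walk_def by auto
  qed
  ultimately show ?thesis by linarith
qed

lemma add_pendants_sym:
  "simple_graph n Adj' \<Longrightarrow> add_pendants n Adj' w k a b \<Longrightarrow> add_pendants n Adj' w k b a"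
  unfolding simple_graph_def add_pendants_def by blast

lemma is_walk_add_pendants:
  assumes "simple_graph n Adj'" and "is_walk n Adj' xs" and "n \<le> N"
  shows "is_walk N (add_pendants n Adj' w k) xs"
  using is_walk_map[OF assms(2), of "add_pendants n Adj' w k" id N] assms
  unfolding simple_graph_def add_pendants_def by auto

lemma add_pendants_walk_exists:
  assumes sg: "simple_graph n Adj'" and con: "connected_graph n Adj'" and w: "w < n"
    and u: "u < n" and v: "v < n + k"
  obtains xs where "is_walk (n + k) (add_pendants n Adj' w k) xs" "hd xs = u" "last xs = v"
proof (cases "v < n")
  case True
  then obtain xs where xs: "is_walk n Adj' xs" "hd xs = u" "last xs = v"
    using con u unfolding connected_graph_def by blast
  then show ?thesis using that[of xs] is_walk_add_pendants[OF sg xs(1), of "n + k" w k] by simp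
next
  case False
  obtain xs where xs: "is_walk n Adj' xs" "hd xs = u" "last xs = w"
    using con u w unfolding connected_graph_def by blast
  then have "is_walk (n + k) (add_pendants n Adj' w k) (xs @ [v])"
    using False v by (intro is_walk_snoc is_walk_add_pendants[OF sg]) (auto simp: add_pendants_def)
  moreover have "xs \<noteq> []" using xs(1) unfolding is_walk_def by auto
  ultimately show ?thesis using that xs by auto
qed

text \<open>Collapsing all pendants onto the pendant \<open>n\<close> and re-expanding the pendant \<open>n\<close> as any
  fixed pendant are both graph homomorphisms, so distances from old vertices are unchanged.\<close>

lemma gdist_add_pendants_collapse:
  assumes sg: "simple_graph n Adj'" and con: "connected_graph n Adj'" and w: "w < n" and k: "0 < k"
    and u: "u < n" and v: "v < n + k"
  shows "gdist (n + k) (add_pendants n Adj' w k) u v = gdist (n + 1) (add_pendants n Adj' w k) u (min v n)"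
proof -
  let ?G = "add_pendants n Adj' w k"
  define collapse where "collapse a = min a n" for a
  define expand where "expand a = (if a = n then max v n else a)" for a
  obtain xs where xs: "is_walk (n + k) ?G xs" "hd xs = u" "last xs = v"
    using add_pendants_walk_exists[OF sg con w u v] .
  have collapse_hom: "?G (collapse a) (collapse b)" if "a < n + k" "b < n + k" "?G a b" for a b
    using that w v unfolding collapse_def add_pendants_def by auto
  have expand_hom: "?G (expand a) (expand b)" if "a < n + 1" "b < n + 1" "?G a b" for a b
    using that w v unfolding expand_def add_pendants_def by auto
  have ne: "xs \<noteq> []" using xs(1) unfolding is_walk_def by auto
  have walk: "is_walk (n + 1) ?G (map collapse xs)"
    by (rule is_walk_map[of "n + k" ?G xs ?G collapse "n + 1", OF xs(1) collapse_hom]) (auto simp: collapse_def)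
  have "gdist (n + 1) ?G (collapse u) (collapse v) \<le> gdist (n + k) ?G u v"
    by (rule gdist_hom_le[of "n + k" ?G xs u v ?G collapse "n + 1", OF xs collapse_hom]) (auto simp: collapse_def)
  moreover have "gdist (n + k) ?G (expand u) (expand (collapse v)) \<le> gdist (n + 1) ?G u (collapse v)"
    using ne xs u v k
    by (intro gdist_hom_le[of "n + 1" ?G "map collapse xs" u "collapse v" ?G expand "n + k", OF walk _ _ expand_hom])
      (auto simp: collapse_def expand_def hd_map last_map)
  moreover have "expand u = u" and "expand (collapse v) = v" and "collapse u = u"
    using u by (auto simp: expand_def collapse_def min_def max_def)
  ultimately show ?thesis unfolding collapse_def by simp
qed

lemma gdist_add_pendants_pendants:
  assumes w: "w < n" and p: "n \<le> p" "p < n + k" and q: "n \<le> q" "q < n + k" and "p \<noteq> q"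
  shows "gdist (n + k) (add_pendants n Adj' w k) p q = 2"
proof (rule gdist_eq_2)
  show "is_walk (n + k) (add_pendants n Adj' w k) [p, w, q]"
    using assms unfolding is_walk_def by (auto simp: add_pendants_def less_Suc_eq nth_Cons split: nat.splits)
qed (use assms in \<open>auto simp: add_pendants_def\<close>)

lemma dist_sq_mat_add_pendants:
  assumes sg: "simple_graph n Adj'" and con: "connected_graph n Adj'" and w: "w < n" and k: "0 < k"
  shows "dist_sq_mat (n + k) (add_pendants n Adj' w k) =
    pendant_blowup n k 4 (dist_sq_mat (n + 1) (add_pendants n Adj' w k))"
proof (rule eq_matI)
  let ?G = "add_pendants n Adj' w k"
  fix r l assume "r < dim_row (pendant_blowup n k 4 (dist_sq_mat (n + 1) ?G))"
    and "l < dim_col (pendant_blowup n k 4 (dist_sq_mat (n + 1) ?G))"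
  then have r: "r < n + k" and l: "l < n + k" by (auto simp: pendant_blowup_def)
  have sym: "\<And>a b. ?G a b \<Longrightarrow> ?G b a" using add_pendants_sym[OF sg] .
  have "gdist (n + k) ?G r l = gdist (n + 1) ?G (min r n) (min l n)" if "\<not> (n \<le> r \<and> n \<le> l)"
  proof (cases "r < n")
    case True
    then show ?thesis using gdist_add_pendants_collapse[OF sg con w k True l] by simp
  next
    case False
    then have l': "l < n" using that by simp
    have "gdist (n + k) ?G r l = gdist (n + k) ?G l r" by (rule gdist_sym[OF sym])
    also have "\<dots> = gdist (n + 1) ?G l (min r n)" by (rule gdist_add_pendants_collapse[OF sg con w k l' r])
    also have "\<dots> = gdist (n + 1) ?G (min r n) l" by (rule gdist_sym[OF sym])
    finally show ?thesis using l' by simp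
  qed
  note dist_eq = this
  show "dist_sq_mat (n + k) ?G $$ (r, l) = pendant_blowup n k 4 (dist_sq_mat (n + 1) ?G) $$ (r, l)"
  proof (cases "n \<le> r \<and> n \<le> l")
    case True
    then show ?thesis
      using r l gdist_self[OF r, of ?G] gdist_add_pendants_pendants[OF w _ r _ l, of Adj']
      by (cases "r = l") (simp_all add: dist_sq_mat_def pendant_blowup_def)
  next
    case False
    then show ?thesis using r l dist_eq[OF False] by (auto simp: dist_sq_mat_def pendant_blowup_def)
  qed
qed (auto simp: dist_sq_mat_def pendant_blowup_def)

theorem proposition3p1:
  fixes n w k :: nat and Adj' :: "nat \<Rightarrow> nat \<Rightarrow> bool"
  assumes "simple_graph n Adj'" and "connected_graph n Adj'"
    and "w < n" and "k \<ge> 2"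
  shows "neg_inertia (dist_sq_mat (n + k) (add_pendants n Adj' w k)) =
         k - 1 + neg_inertia (dist_sq_mat (n + 1) (add_pendants n Adj' w k)
           + (4 - 4 / real k) \<cdot>\<^sub>m
             (mat_of_cols (n + 1) [unit_vec (n + 1) n] * mat_of_rows (n + 1) [unit_vec (n + 1) n]))"
proof -
  let ?G = "add_pendants n Adj' w k"
  have k: "0 < k" using assms(4) by simp
  define T where "T = dist_sq_mat (n + 1) ?G + (4 - 4 / real k) \<cdot>\<^sub>m
    (mat_of_cols (n + 1) [unit_vec (n + 1) n] * mat_of_rows (n + 1) [unit_vec (n + 1) n])"
  have T: "T \<in> carrier_mat (n + 1) (n + 1)" unfolding T_def dist_sq_mat_def by simp
  have T_index: "T $$ (i, j) = (real (gdist (n + 1) ?G i j))\<^sup>2 + (4 - 4 / real k) * of_bool (i = n \<and> j = n)"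
    if "i < n + 1" "j < n + 1" for i j
    using that by (simp add: T_def dist_sq_mat_def scalar_prod_def mat_of_cols_def mat_of_rows_def unit_vec_def)
  have gdist_sym': "gdist (Suc n) ?G i j = gdist (Suc n) ?G j i" for i j
    using gdist_sym[OF add_pendants_sym[OF assms(1)]] .
  have "transpose_mat T = T"
  proof (rule eq_matI)
    fix i j assume "i < dim_row T" and "j < dim_col T"
    then show "transpose_mat T $$ (i, j) = T $$ (i, j)"
      using T by (simp add: T_index gdist_sym' conj_commute)
  qed (use T in auto)
  moreover have "T $$ (n, n) = 4 - 4 / real k" using T_index gdist_self[of n "n + 1" ?G] by simp
  moreover have "dist_sq_mat (n + k) ?G = pendant_blowup n k 4 T"
    unfolding dist_sq_mat_add_pendants[OF assms(1-3) k]
    by (rule pendant_blowup_cong) (simp add: T_index dist_sq_mat_def)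
  ultimately show ?thesis
    using neg_inertia_pendant_blowup[OF assms(4) _ T] unfolding T_def by simp
qed

end
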